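(* Let $\Pi\subseteq A=\Delta^4\times\Delta^{n-1}$ be the $4$-permutohedron point set defined in the context. For every triangulation $\mathscr T$ of $\Pi$ there is a triangulation $\mathscr T'$ of $A$ with $\mathscr T\subseteq\mathscr T'$.
   Context: For a finite point set $A\subset\mathbb R^d$: a cell is a subset of $A$; a simplex is an affinely independent cell; a face of a cell $C$ is a subset $F\subseteq C$ which is the set of minimizers on $C$ of some linear functional. A triangulation of $A$ is a collection $\mathscr T$ of simplices of $A$, closed under taking faces, such that for all $\sigma,\sigma'\in\mathscr T$, $\mathrm{conv}(\sigma)\cap\mathrm{conv}(\sigma')=\mathrm{conv}(F)$ for a common face $F$ of $\sigma$ and $\sigma'$, and such that $\bigcup_{\sigma\in\mathscr T}\mathrm{conv}(\sigma)=\mathrm{conv}(A)$. Setting. $\Gamma_5^2$ is the set of unordered pairs $(ij)=(ji)$ of distinct elements of $[5]$. For each $\alpha\in\Gamma_5^2$ let $\Delta_\alpha$ be a finite set, the sets being pairwise disjoint, and let $\Delta^{n-1}:=\bigcup_\alpha\Delta_\alpha$ be the standard basis of $\mathbb R^n$. Let $e_1,\dots,e_5$ be the standard basis of $\mathbb R^5$ and $A:=\Delta^4\times\Delta^{n-1}=\{(e_i,f):i\in[5],f\in\Delta^{n-1}\}$. Define $\Pi:=\bigcup_{(ij)\in\Gamma_5^2}\bigcup_{f\in\Delta_{(ij)}}\{(e_i,f),(e_j,f)\}\subseteq A$. *)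

theory Defs
  imports "HOL-Analysis.Analysis" "HOL-Library.Numeral_Type"
begin

definition is_face :: "'a::real_vector set \<Rightarrow> 'a set \<Rightarrow> bool" where
  "is_face C F \<longleftrightarrow> F = {} \<or>
     (\<exists>\<phi>::'a \<Rightarrow> real. linear \<phi> \<and> F = {x \<in> C. \<forall>y\<in>C. \<phi> x \<le> \<phi> y})"

definition is_simplex_of :: "'a::real_vector set \<Rightarrow> 'a set \<Rightarrow> bool" where
  "is_simplex_of A \<sigma> \<longleftrightarrow> \<sigma> \<subseteq> A \<and> \<not> affine_dependent \<sigma>"

definition triangulation :: "'a::real_vector set \<Rightarrow> 'a set set \<Rightarrow> bool" where
  "triangulation A T \<longleftrightarrow>
     (\<forall>\<sigma>\<in>T. is_simplex_of A \<sigma>) \<and>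
     (\<forall>\<sigma>\<in>T. \<forall>F. is_face \<sigma> F \<longrightarrow> F \<in> T) \<and>
     (\<forall>\<sigma>\<in>T. \<forall>\<sigma>'\<in>T. \<exists>F. is_face \<sigma> F \<and> is_face \<sigma>' F \<and>
         convex hull \<sigma> \<inter> convex hull \<sigma>' = convex hull F) \<and>
     (\<Union>\<sigma>\<in>T. convex hull \<sigma>) = convex hull A"

text \<open>The product of simplices \<Delta>^4 \<times> \<Delta>^{n-1}, with the basis of R^n indexed by the finite type 'n.\<close>
definition prodA :: "((real^5) \<times> (real^('n::finite))) set" where
  "prodA = {(axis i 1, axis f 1) | i f. True}"

text \<open>The permutohedron point set: lab f is the pair (ij) with f \<in> \<Delta>_(ij).\<close>
definition perm_Pi :: "('n::finite \<Rightarrow> 5 set) \<Rightarrow> ((real^5) \<times> (real^'n)) set" where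
  "perm_Pi lab = {(axis i 1, axis f 1) | i f. i \<in> lab f}"

end

theory Submission
  imports Defs
begin

text \<open>Every point of \<Delta>^4 \<times> \<Delta>^{n-1} is a vertex of its convex hull, and the
  permutohedron set \<Pi> is a subset of it. Triangulations of a subset of a point set in convex
  position always extend, by placing the missing points one at a time: if p lies outside the
  convex hull of B, a triangulation T of B together with the cones with apex p over the faces
  of T visible from p is a triangulation of B \<union> {p}. The labels need not be pairs for this.\<close>

lemma is_face_subset: "is_face \<sigma> F \<Longrightarrow> F \<subseteq> \<sigma>"
  unfolding is_face_def by auto

lemma is_face_of_affine_independent:
  fixes \<sigma> :: "'a::euclidean_space set"
  assumes ind: "\<not> affine_dependent \<sigma>" and sub: "F \<subseteq> \<sigma>"
  shows "is_face \<sigma> F"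
proof (cases "F = {}")
  case True thus ?thesis by (simp add: is_face_def)
next
  case False
  then obtain a where aF: "a \<in> F" by blast
  have a\<sigma>: "a \<in> \<sigma>" using aF sub by blast
  have "\<not> dependent ((\<lambda>x. -a + x) ` (\<sigma> - {a}))"
    using ind affine_dependent_iff_dependent[of a "\<sigma> - {a}"] a\<sigma> by (simp add: insert_absorb)
  then obtain g :: "'a \<Rightarrow> real" where g: "linear g"
    and gv: "\<forall>x\<in>(\<lambda>x. -a + x) ` (\<sigma> - {a}). g x = (if x + a \<in> F then 0 else 1)"
    using linear_independent_extend[of "(\<lambda>x. -a + x) ` (\<sigma> - {a})" "\<lambda>x. if x + a \<in> F then 0 else (1::real)"]
    by blast
  have val: "g v = g a + (if v \<in> F then 0 else 1)" if "v \<in> \<sigma>" for v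
  proof (cases "v = a")
    case True then show ?thesis using aF by simp
  next
    case False
    then have "g (-a + v) = (if v \<in> F then 0 else 1)" using gv that by auto
    moreover have "g (-a + v) = - g a + g v" using g by (simp add: linear_diff)
    ultimately show ?thesis by simp
  qed
  have "F = {x \<in> \<sigma>. \<forall>y\<in>\<sigma>. g x \<le> g y}"
  proof (intro set_eqI iffI)
    fix x assume xF: "x \<in> F"
    then have x\<sigma>: "x \<in> \<sigma>" using sub by blast
    have "g x \<le> g y" if "y \<in> \<sigma>" for y
      using val[OF x\<sigma>] val[OF that] xF by simp
    then show "x \<in> {x \<in> \<sigma>. \<forall>y\<in>\<sigma>. g x \<le> g y}" using x\<sigma> by blast
  next
    fix x assume x: "x \<in> {x \<in> \<sigma>. \<forall>y\<in>\<sigma>. g x \<le> g y}"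
    then have "g x \<le> g a" using a\<sigma> by auto
    moreover have "x \<in> \<sigma>" using x by blast
    ultimately show "x \<in> F" using val[of x] val[OF a\<sigma>] aF by (cases "x \<in> F") simp_all
  qed
  then show ?thesis unfolding is_face_def using g by blast
qed

lemma triangulation_iff:
  fixes B :: "'a::euclidean_space set"
  shows "triangulation B T \<longleftrightarrow>
     (\<forall>\<sigma>\<in>T. \<sigma> \<subseteq> B \<and> \<not> affine_dependent \<sigma>) \<and>
     (\<forall>\<sigma>\<in>T. \<forall>F\<subseteq>\<sigma>. F \<in> T) \<and>
     (\<forall>\<sigma>\<in>T. \<forall>\<sigma>'\<in>T. \<exists>H\<subseteq>\<sigma> \<inter> \<sigma>'. convex hull \<sigma> \<inter> convex hull \<sigma>' = convex hull H) \<and>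
     (\<Union>\<sigma>\<in>T. convex hull \<sigma>) = convex hull B"
proof -
  have face_iff: "is_face \<sigma> F \<longleftrightarrow> F \<subseteq> \<sigma>" if "\<not> affine_dependent \<sigma>" for \<sigma> F :: "'a set"
    using that is_face_subset is_face_of_affine_independent by blast
  show ?thesis
    unfolding triangulation_def is_simplex_of_def
    by (auto simp: face_iff)
qed

lemma
  fixes B :: "'a::euclidean_space set"
  assumes "triangulation B T"
  shows triangulation_simplexD: "\<sigma> \<in> T \<Longrightarrow> \<sigma> \<subseteq> B \<and> \<not> affine_dependent \<sigma>"
    and triangulation_subset_closed: "\<sigma> \<in> T \<Longrightarrow> F \<subseteq> \<sigma> \<Longrightarrow> F \<in> T"
    and triangulation_meet:
      "\<sigma> \<in> T \<Longrightarrow> \<sigma>' \<in> T \<Longrightarrow> \<exists>H\<subseteq>\<sigma> \<inter> \<sigma>'. convex hull \<sigma> \<inter> convex hull \<sigma>' = convex hull H"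
    and triangulation_Union: "(\<Union>\<sigma>\<in>T. convex hull \<sigma>) = convex hull B"
  using assms unfolding triangulation_iff by simp_all

lemma triangulation_insert_empty:
  fixes B :: "'a::euclidean_space set"
  assumes "triangulation B T"
  shows "triangulation B (insert {} T)"
  using assms unfolding triangulation_iff by (auto intro: exI[of _ "{}"])

lemma rel_interior_convex_hull_step:
  fixes F :: "'a::euclidean_space set"
  assumes y: "y \<in> rel_interior (convex hull F)" and q: "q \<in> affine hull F"
  shows "\<exists>\<epsilon>>0. \<epsilon> \<le> 1 \<and> (1 - \<epsilon>) *\<^sub>R y + \<epsilon> *\<^sub>R q \<in> convex hull F"
proof -
  have "y \<in> affine hull F"
    using y rel_interior_subset convex_hull_subset_affine_hull by blast
  then have "2 *\<^sub>R y + (-1) *\<^sub>R q \<in> affine hull (convex hull F)"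
    using q by (intro mem_affine) auto
  then obtain m where m: "m > 1"
    and beyond: "\<And>e. 1 < e \<Longrightarrow> e \<le> m \<Longrightarrow> (1 - e) *\<^sub>R (2 *\<^sub>R y + (-1) *\<^sub>R q) + e *\<^sub>R y \<in> convex hull F"
    using convex_rel_interior_if[OF convex_convex_hull y] by blast
  define \<epsilon> where "\<epsilon> = min m 2 - 1"
  have "(1 - \<epsilon>) *\<^sub>R y + \<epsilon> *\<^sub>R q = (1 - (\<epsilon> + 1)) *\<^sub>R (2 *\<^sub>R y + (-1) *\<^sub>R q) + (\<epsilon> + 1) *\<^sub>R y"
    by (simp add: algebra_simps flip: scaleR_2)
  also have "\<dots> \<in> convex hull F"
    using m by (intro beyond) (auto simp: \<epsilon>_def)
  finally show ?thesis
    using m by (intro exI[of _ \<epsilon>]) (auto simp: \<epsilon>_def)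
qed

lemma closed_segment_first_hit:
  fixes C :: "'a::euclidean_space set"
  assumes "closed C" "convex C" "b \<in> C"
  shows "\<exists>y\<in>closed_segment p b. closed_segment p y \<inter> C = {y}"
proof -
  define K where "K = C \<inter> closed_segment p b"
  have K: "closed K" "convex K" "b \<in> K"
    unfolding K_def using assms by (auto intro: convex_Int)
  define y where "y = closest_point K p"
  have yK: "y \<in> K" unfolding y_def using K closest_point_in_set by blast
  have "z = y" if z: "z \<in> closed_segment p y" "z \<in> C" for z
  proof -
    have "closed_segment p y \<subseteq> closed_segment p b"
      using yK unfolding K_def by (simp add: subset_closed_segment)
    then have "z \<in> K" using z unfolding K_def by blast
    moreover have "dist p z \<le> dist p w" if "w \<in> K" for w
      using dist_in_closed_segment[OF z(1)] closest_point_le[OF K(1) that, of p]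
      by (simp add: y_def dist_commute)
    ultimately show "z = y"
      unfolding y_def using K by (intro closest_point_unique) auto
  qed
  moreover have "y \<in> closed_segment p b" "y \<in> C" using yK unfolding K_def by auto
  ultimately show ?thesis by auto
qed

lemma first_hit_before:
  fixes p :: "'a::real_vector"
  assumes hit: "closed_segment p y \<inter> C = {y}" and "p \<noteq> y" "0 \<le> t" "t < 1"
  shows "(1 - t) *\<^sub>R p + t *\<^sub>R y \<notin> C"
proof
  assume "(1 - t) *\<^sub>R p + t *\<^sub>R y \<in> C"
  moreover have "(1 - t) *\<^sub>R p + t *\<^sub>R y \<in> closed_segment p y"
    using assms by (auto simp: closed_segment_def)
  ultimately have "(1 - t) *\<^sub>R p + t *\<^sub>R y = y" using hit by blast
  then have "(1 - t) *\<^sub>R (p - y) = 0" by (simp add: algebra_simps)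
  then show False using assms by simp
qed

lemma exists_subset_rel_interior_convex_hull:
  fixes \<sigma> :: "'a::euclidean_space set"
  assumes \<sigma>: "\<not> affine_dependent \<sigma>" and y: "y \<in> convex hull \<sigma>"
  shows "\<exists>F\<subseteq>\<sigma>. y \<in> rel_interior (convex hull F)"
proof -
  have fin: "finite \<sigma>" using aff_independent_finite \<sigma> by blast
  obtain w where w: "\<forall>z\<in>\<sigma>. 0 \<le> w z" "sum w \<sigma> = 1" "(\<Sum>z\<in>\<sigma>. w z *\<^sub>R z) = y"
    using y convex_hull_finite[OF fin] by blast
  define F where "F = {z\<in>\<sigma>. 0 < w z}"
  have F: "F \<subseteq> \<sigma>" unfolding F_def by blast
  have zero: "\<forall>z\<in>\<sigma> - F. w z = 0" using w(1) unfolding F_def by force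
  have "sum w F = 1" "(\<Sum>z\<in>F. w z *\<^sub>R z) = y"
    using w(2,3) sum.mono_neutral_right[OF fin F] zero by (metis (no_types, lifting) scale_zero_left)+
  then have "y \<in> rel_interior (convex hull F)"
    unfolding rel_interior_convex_hull_explicit[OF affine_independent_subset[OF \<sigma> F]]
    unfolding F_def by blast
  then show ?thesis using F by blast
qed

definition visible_from :: "'a::real_vector \<Rightarrow> 'a set \<Rightarrow> 'a set \<Rightarrow> bool" where
  "visible_from p C F \<longleftrightarrow>
     \<not> affine_dependent (insert p F) \<and> convex hull (insert p F) \<inter> C \<subseteq> convex hull F"

lemma visible_from_subset:
  fixes p :: "'a::euclidean_space"
  assumes vis: "visible_from p C F" and "H \<subseteq> F" "p \<notin> F"
  shows "visible_from p C H"
  unfolding visible_from_def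
proof
  have indep: "\<not> affine_dependent (insert p F)" using vis by (simp add: visible_from_def)
  then show "\<not> affine_dependent (insert p H)"
    using assms(2) affine_dependent_subset[of "insert p H" "insert p F"] by blast
  have "convex hull (insert p H) \<inter> C \<subseteq> convex hull (insert p H) \<inter> convex hull F"
    using vis assms(2) hull_mono[of "insert p H" "insert p F"] by (auto simp: visible_from_def)
  also have "\<dots> = convex hull (insert p H \<inter> F)"
    using indep assms(2) by (intro convex_hull_Int [symmetric]) (simp add: insert_absorb2 Un_absorb1 insert_mono)
  also have "insert p H \<inter> F = H" using assms(2,3) by blast
  finally show "convex hull (insert p H) \<inter> C \<subseteq> convex hull H" .
qed

lemma first_hit_not_in_affine_hull:
  fixes p :: "'a::euclidean_space"
  assumes "p \<notin> C" "convex hull F \<subseteq> C"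
    and y: "y \<in> rel_interior (convex hull F)" and hit: "closed_segment p y \<inter> C = {y}"
  shows "p \<notin> affine hull F"
proof
  assume "p \<in> affine hull F"
  then obtain \<epsilon> where \<epsilon>: "\<epsilon> > 0" "\<epsilon> \<le> 1" "(1 - \<epsilon>) *\<^sub>R y + \<epsilon> *\<^sub>R p \<in> convex hull F"
    using rel_interior_convex_hull_step[OF y] by blast
  have "p \<noteq> y" using y rel_interior_subset assms(1,2) by blast
  then have "(1 - (1 - \<epsilon>)) *\<^sub>R p + (1 - \<epsilon>) *\<^sub>R y \<notin> C"
    using \<epsilon> by (intro first_hit_before[OF hit]) auto
  then show False using \<epsilon>(3) assms(2) by (auto simp: add.commute)
qed

lemma convex_hull_insert_Int_first_hit:
  fixes p :: "'a::euclidean_space"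
  assumes C: "convex C" "p \<notin> C" and F: "convex hull F \<subseteq> C"
    and y: "y \<in> rel_interior (convex hull F)" and hit: "closed_segment p y \<inter> C = {y}"
  shows "convex hull (insert p F) \<inter> C \<subseteq> convex hull F"
proof
  fix x assume x: "x \<in> convex hull (insert p F) \<inter> C"
  have yF: "y \<in> convex hull F" using y rel_interior_subset by blast
  have py: "p \<noteq> y" using yF F C(2) by blast
  have "F \<noteq> {}" using yF by auto
  then obtain \<alpha> \<beta> f where ab: "\<alpha> \<ge> 0" "\<beta> \<ge> 0" "\<alpha> + \<beta> = 1" and f: "f \<in> convex hull F"
    and xe: "x = \<alpha> *\<^sub>R p + \<beta> *\<^sub>R f"
    using x convex_hull_insert[of F p] by blast
  show "x \<in> convex hull F"
  proof (cases "\<alpha> = 0")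
    case True then show ?thesis using ab f xe by simp
  next
    case False
    \<comment> \<open>Push f through y to a point z of the simplex; a suitable convex combination
      of z and x then lies on the segment from p to y, strictly before y.\<close>
    have "f \<in> affine hull F" using f convex_hull_subset_affine_hull by blast
    then have "y + (y - f) \<in> affine hull F"
      using yF convex_hull_subset_affine_hull mem_affine_3_minus[OF affine_affine_hull, of y F y f 1]
      by auto
    then obtain \<epsilon> where \<epsilon>: "\<epsilon> > 0" "\<epsilon> \<le> 1"
      and z: "(1 - \<epsilon>) *\<^sub>R y + \<epsilon> *\<^sub>R (y + (y - f)) \<in> convex hull F"
      using rel_interior_convex_hull_step[OF y] by blast
    define \<gamma> where "\<gamma> = \<epsilon> / (\<beta> + \<epsilon>)"
    have \<gamma>: "0 < \<gamma>" "\<gamma> \<le> 1" "\<gamma> * \<beta> = (1 - \<gamma>) * \<epsilon>" "(1 - \<gamma>) * (1 + \<epsilon>) = 1 - \<gamma> * \<alpha>"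
      unfolding \<gamma>_def using \<epsilon> ab by (auto simp: field_simps)
        (metis add_diff_cancel_left' distrib_left mult.commute mult.right_neutral)
    have "(1 - \<gamma>) *\<^sub>R ((1 - \<epsilon>) *\<^sub>R y + \<epsilon> *\<^sub>R (y + (y - f))) + \<gamma> *\<^sub>R x \<in> C"
      using z F x \<gamma>(1,2) convexD[OF C(1)] by (metis IntD2 diff_ge_0_iff_ge diff_add_cancel less_le subsetD)
    also have "(1 - \<gamma>) *\<^sub>R ((1 - \<epsilon>) *\<^sub>R y + \<epsilon> *\<^sub>R (y + (y - f))) + \<gamma> *\<^sub>R x
        = ((1 - \<gamma>) * (1 + \<epsilon>)) *\<^sub>R y + (\<gamma> * \<alpha>) *\<^sub>R p + (\<gamma> * \<beta> - (1 - \<gamma>) * \<epsilon>) *\<^sub>R f"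
      unfolding xe by (simp add: algebra_simps)
    also have "\<dots> = (1 - (1 - \<gamma> * \<alpha>)) *\<^sub>R p + (1 - \<gamma> * \<alpha>) *\<^sub>R y"
      using \<gamma> by simp
    finally have "(1 - (1 - \<gamma> * \<alpha>)) *\<^sub>R p + (1 - \<gamma> * \<alpha>) *\<^sub>R y \<in> C" .
    moreover have "(1 - (1 - \<gamma> * \<alpha>)) *\<^sub>R p + (1 - \<gamma> * \<alpha>) *\<^sub>R y \<notin> C"
      using \<gamma> ab False by (intro first_hit_before[OF hit py]) (auto intro: mult_le_one)
    ultimately show ?thesis by blast
  qed
qed

lemma visible_from_first_hit:
  fixes p :: "'a::euclidean_space"
  assumes "convex C" "p \<notin> C" "\<not> affine_dependent F" "convex hull F \<subseteq> C"
    and "y \<in> rel_interior (convex hull F)" "closed_segment p y \<inter> C = {y}"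
  shows "visible_from p C F"
  unfolding visible_from_def
  using affine_dependent_choose[OF assms(3)] first_hit_not_in_affine_hull[OF assms(2,4-6)]
    convex_hull_insert_Int_first_hit[OF assms(1,2,4-6)] by blast

lemma closed_segment_common_point:
  fixes p :: "'a::real_vector"
  assumes "x \<in> closed_segment p a" "x \<in> closed_segment p b" "x \<noteq> p"
  shows "a \<in> closed_segment p b \<or> b \<in> closed_segment p a"
proof -
  obtain u v where u: "0 \<le> u" "u \<le> 1" "x = (1 - u) *\<^sub>R p + u *\<^sub>R a"
    and v: "0 \<le> v" "v \<le> 1" "x = (1 - v) *\<^sub>R p + v *\<^sub>R b"
    using assms(1,2) by (auto simp: closed_segment_def)
  have "u \<noteq> 0" "v \<noteq> 0" using u v assms(3) by auto
  have dir: "u *\<^sub>R (a - p) = v *\<^sub>R (b - p)"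
    using u(3) v(3) by (simp add: algebra_simps)
  have shrink: "c = (1 - s / r) *\<^sub>R p + (s / r) *\<^sub>R d"
    if "r *\<^sub>R (c - p) = s *\<^sub>R (d - p)" "r \<noteq> 0" for c d :: 'a and r s :: real
  proof -
    have "c - p = (s / r) *\<^sub>R (d - p)"
      using that by (metis divide_inverse_commute scaleR_scaleR vector_fraction_eq_iff)
    then show ?thesis by (simp add: algebra_simps)
  qed
  show ?thesis
  proof (cases "v \<le> u")
    case True
    moreover have "0 \<le> v / u" "v / u \<le> 1" using True u v \<open>u \<noteq> 0\<close> by auto
    ultimately show ?thesis
      using shrink[OF dir \<open>u \<noteq> 0\<close>] unfolding closed_segment_def by blast
  next
    case False
    then have "0 \<le> u / v" "u / v \<le> 1" using u v \<open>v \<noteq> 0\<close> by auto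
    then show ?thesis
      using shrink[OF dir[symmetric] \<open>v \<noteq> 0\<close>] unfolding closed_segment_def by blast
  qed
qed

lemma closed_segment_subset_cone:
  fixes p :: "'a::euclidean_space"
  assumes G: "visible_from p C G" and F: "convex hull F \<subseteq> C"
    and a: "a \<in> convex hull F" "a \<in> closed_segment p b" and b: "b \<in> convex hull G"
    and H: "convex hull F \<inter> convex hull G \<subseteq> convex hull H"
  shows "closed_segment p a \<subseteq> convex hull (insert p H)"
proof -
  have "closed_segment p b \<subseteq> convex hull (insert p G)"
    using b hull_mono[of G "insert p G"] by (intro closed_segment_subset) (auto simp: hull_inc)
  then have "a \<in> convex hull G"
    using a F G by (auto simp: visible_from_def)
  then have "a \<in> convex hull (insert p H)"
    using a H hull_mono[of H "insert p H"] by blast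
  then show ?thesis by (intro closed_segment_subset) (auto simp: hull_inc)
qed

lemma convex_hull_insert_Int_visible:
  fixes p :: "'a::euclidean_space"
  assumes F: "visible_from p C F" "convex hull F \<subseteq> C"
    and G: "visible_from p C G" "convex hull G \<subseteq> C"
    and H: "convex hull F \<inter> convex hull G = convex hull H" "H \<subseteq> F" "H \<subseteq> G"
  shows "convex hull (insert p F) \<inter> convex hull (insert p G) = convex hull (insert p H)"
proof
  show "convex hull (insert p H) \<subseteq> convex hull (insert p F) \<inter> convex hull (insert p G)"
    using H by (intro Int_greatest hull_mono) auto
  show "convex hull (insert p F) \<inter> convex hull (insert p G) \<subseteq> convex hull (insert p H)"
  proof
    fix x assume x: "x \<in> convex hull (insert p F) \<inter> convex hull (insert p G)"
    have pH: "p \<in> convex hull (insert p H)" by (simp add: hull_inc)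
    show "x \<in> convex hull (insert p H)"
    proof (cases "F = {} \<or> G = {} \<or> x = p")
      case True then show ?thesis using x pH by auto
    next
      case False
      then obtain a b where a: "a \<in> convex hull F" "x \<in> closed_segment p a"
        and b: "b \<in> convex hull G" "x \<in> closed_segment p b"
        using x by (auto simp: convex_hull_insert_segments)
      then consider "a \<in> closed_segment p b" | "b \<in> closed_segment p a"
        using closed_segment_common_point False by blast
      then show ?thesis
      proof cases
        case 1
        then show ?thesis using closed_segment_subset_cone[OF G(1) F(2) a(1) 1 b(1)] H(1) a(2) by blast
      next
        case 2
        then show ?thesis using closed_segment_subset_cone[OF F(1) G(2) b(1) 2 a(1)] H(1) b(2) by blast
      qed
    qed
  qed
qed

lemma triangulation_cover_visible_cones:
  fixes B :: "'a::euclidean_space set"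
  assumes fin: "finite B" and T: "triangulation B T" "{} \<in> T"
    and p: "p \<notin> convex hull B" and x: "x \<in> convex hull (insert p B)"
  shows "\<exists>F\<in>T. x \<in> convex hull F \<or> (visible_from p (convex hull B) F \<and> x \<in> convex hull (insert p F))"
proof -
  note simplices = triangulation_simplexD[OF T(1)]
    and closed = triangulation_subset_closed[OF T(1)]
    and cover = triangulation_Union[OF T(1)]
  consider "x \<in> convex hull B" | "B = {}" | "x \<notin> convex hull B" "B \<noteq> {}" by blast
  then show ?thesis
  proof cases
    case 1
    then show ?thesis using cover by blast
  next
    case 2
    then have "x = p" "visible_from p (convex hull B) {}"
      using x by (auto simp: visible_from_def)
    then show ?thesis using T(2) by (intro bexI[of _ "{}"]) auto
  next
    case 3
    then obtain b where b: "b \<in> convex hull B" "x \<in> closed_segment p b"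
      using x by (auto simp: convex_hull_insert_segments)
    have "closed (convex hull B)"
      using fin by (simp add: compact_imp_closed finite_imp_compact_convex_hull)
    then obtain y where y: "y \<in> closed_segment p b" and hit: "closed_segment p y \<inter> convex hull B = {y}"
      using closed_segment_first_hit[OF _ convex_convex_hull b(1)] by blast
    have yB: "y \<in> convex hull B" using hit by blast
    have "closed_segment y b \<subseteq> convex hull B"
      using yB b(1) by (simp add: closed_segment_subset)
    then have xy: "x \<in> closed_segment p y"
      using b(2) 3(1) Un_closed_segment[OF y] by blast
    obtain \<sigma> where \<sigma>: "\<sigma> \<in> T" "y \<in> convex hull \<sigma>"
      using yB cover by blast
    then obtain F where F: "F \<subseteq> \<sigma>" "y \<in> rel_interior (convex hull F)"
      using exists_subset_rel_interior_convex_hull simplices[OF \<sigma>(1)] by blast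
    have FT: "F \<in> T" using closed \<sigma>(1) F(1) by blast
    have "visible_from p (convex hull B) F"
      using simplices[OF FT] hull_mono[of F B]
      by (intro visible_from_first_hit[OF convex_convex_hull p _ _ F(2) hit]) auto
    moreover have "closed_segment p y \<subseteq> convex hull (insert p F)"
      using F(2) rel_interior_subset hull_mono[of F "insert p F"]
      by (intro closed_segment_subset) (auto intro: hull_inc)
    ultimately show ?thesis using FT xy by blast
  qed
qed

lemma triangulation_placing_subset_closed:
  fixes B :: "'a::euclidean_space set"
  assumes T: "triangulation B T" and p: "p \<notin> convex hull B"
    and \<sigma>: "\<sigma> \<in> T \<union> {insert p F | F. F \<in> T \<and> visible_from p (convex hull B) F}" and K: "K \<subseteq> \<sigma>"
  shows "K \<in> T \<union> {insert p F | F. F \<in> T \<and> visible_from p (convex hull B) F}"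
proof (cases "\<sigma> \<in> T")
  case True
  then show ?thesis using K triangulation_subset_closed[OF T] by blast
next
  case False
  then obtain F where F: "F \<in> T" "visible_from p (convex hull B) F" "\<sigma> = insert p F"
    using \<sigma> by blast
  have "p \<notin> F"
    using triangulation_simplexD[OF T F(1)] p hull_subset[of B convex] by blast
  show ?thesis
  proof (cases "p \<in> K")
    case True
    have "K - {p} \<subseteq> F" using K F(3) by blast
    then have "K - {p} \<in> T" "visible_from p (convex hull B) (K - {p})"
      using triangulation_subset_closed[OF T F(1)] visible_from_subset[OF F(2) _ \<open>p \<notin> F\<close>]
      by blast+
    moreover have "K = insert p (K - {p})" using True by blast
    ultimately show ?thesis by blast
  next
    case False
    then have "K \<subseteq> F" using K F(3) by blast
    then show ?thesis using triangulation_subset_closed[OF T F(1)] by blast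
  qed
qed

lemma triangulation_placing_meet:
  fixes B :: "'a::euclidean_space set"
  assumes T: "triangulation B T" and "\<sigma> \<in> T \<union> {insert p F | F. F \<in> T \<and> visible_from p (convex hull B) F}" "\<sigma>' \<in> T \<union> {insert p F | F. F \<in> T \<and> visible_from p (convex hull B) F}"
  shows "\<exists>H\<subseteq>\<sigma> \<inter> \<sigma>'. convex hull \<sigma> \<inter> convex hull \<sigma>' = convex hull H"
proof -
  note meet = triangulation_meet[OF T]
  have hull_B: "convex hull \<sigma> \<subseteq> convex hull B" if "\<sigma> \<in> T" for \<sigma>
    using triangulation_simplexD[OF T that] by (simp add: hull_mono)
  have old_new: "\<exists>H\<subseteq>\<sigma> \<inter> insert p G. convex hull \<sigma> \<inter> convex hull (insert p G) = convex hull H"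
    if "\<sigma> \<in> T" "G \<in> T" "visible_from p (convex hull B) G" for \<sigma> G
  proof -
    have "convex hull (insert p G) \<inter> convex hull B \<subseteq> convex hull G"
      using that(3) by (simp add: visible_from_def)
    then have "convex hull \<sigma> \<inter> convex hull (insert p G) = convex hull \<sigma> \<inter> convex hull G"
      using hull_B[OF that(1)] hull_mono[OF subset_insertI, of convex G p] by blast
    then show ?thesis using meet[OF that(1,2)] by blast
  qed
  have new_new: "\<exists>H\<subseteq>insert p F \<inter> insert p G.
      convex hull (insert p F) \<inter> convex hull (insert p G) = convex hull H"
    if FG: "F \<in> T" "visible_from p (convex hull B) F" "G \<in> T" "visible_from p (convex hull B) G" for F G
  proof -
    obtain H where "H \<subseteq> F \<inter> G" "convex hull F \<inter> convex hull G = convex hull H"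
      using meet[OF FG(1,3)] by blast
    then show ?thesis
      using convex_hull_insert_Int_visible[of p _ F G H] FG hull_B
      by (intro exI[of _ "insert p H"]) auto
  qed
  consider "\<sigma> \<in> T" "\<sigma>' \<in> T"
    | G where "\<sigma> \<in> T" "G \<in> T" "visible_from p (convex hull B) G" "\<sigma>' = insert p G"
    | F where "F \<in> T" "visible_from p (convex hull B) F" "\<sigma> = insert p F" "\<sigma>' \<in> T"
    | F G where "F \<in> T" "visible_from p (convex hull B) F" "\<sigma> = insert p F"
        "G \<in> T" "visible_from p (convex hull B) G" "\<sigma>' = insert p G"
    using assms(2,3) by blast
  then show ?thesis
  proof cases
    case 1
    then show ?thesis using meet by blast
  next
    case 2
    then show ?thesis using old_new by blast
  next
    case 3
    then show ?thesis using old_new[of \<sigma>' F] by (simp add: Int_commute)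
  next
    case 4
    then show ?thesis using new_new by blast
  qed
qed

lemma triangulation_placing:
  fixes B :: "'a::euclidean_space set"
  assumes fin: "finite B" and T: "triangulation B T" "{} \<in> T" and p: "p \<notin> convex hull B"
  shows "triangulation (insert p B) (T \<union> {insert p F | F. F \<in> T \<and> visible_from p (convex hull B) F})"
    (is "triangulation _ ?T'")
proof -
  have "\<forall>\<sigma>\<in>?T'. \<sigma> \<subseteq> insert p B \<and> \<not> affine_dependent \<sigma>"
    using triangulation_simplexD[OF T(1)] unfolding visible_from_def by blast
  moreover have "\<forall>\<sigma>\<in>?T'. \<forall>K\<subseteq>\<sigma>. K \<in> ?T'"
    using triangulation_placing_subset_closed[OF T(1) p] by blast
  moreover have "\<forall>\<sigma>\<in>?T'. \<forall>\<sigma>'\<in>?T'. \<exists>H\<subseteq>\<sigma> \<inter> \<sigma>'. convex hull \<sigma> \<inter> convex hull \<sigma>' = convex hull H"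
    using triangulation_placing_meet[OF T(1)] by blast
  moreover have "(\<Union>\<sigma>\<in>?T'. convex hull \<sigma>) = convex hull (insert p B)"
  proof
    show "(\<Union>\<sigma>\<in>?T'. convex hull \<sigma>) \<subseteq> convex hull (insert p B)"
      using calculation(1) by (intro UN_least hull_mono) blast
    show "convex hull (insert p B) \<subseteq> (\<Union>\<sigma>\<in>?T'. convex hull \<sigma>)"
      using triangulation_cover_visible_cones[OF fin T p] by blast
  qed
  ultimately show ?thesis unfolding triangulation_iff by (intro conjI)
qed

lemma triangulation_extend:
  fixes A :: "'a::euclidean_space set"
  assumes fin: "finite A" and vertices: "\<And>p. p \<in> A \<Longrightarrow> p \<notin> convex hull (A - {p})"
    and "B \<subseteq> A" "triangulation B T"
  shows "\<exists>T'. triangulation A T' \<and> T \<subseteq> T'"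
  using assms(3,4)
proof (induction "card (A - B)" arbitrary: B T)
  case 0
  then have "B = A" using fin by auto
  then show ?case using 0 by blast
next
  case (Suc n)
  then have "A - B \<noteq> {}" by auto
  then obtain p where p: "p \<in> A" "p \<notin> B" by blast
  have finB: "finite B" using Suc.prems(1) fin finite_subset by blast
  have "convex hull B \<subseteq> convex hull (A - {p})" using Suc.prems(1) p by (intro hull_mono) blast
  then have "p \<notin> convex hull B" using vertices[OF p(1)] by blast
  \<comment> \<open>The empty simplex is added so that the new vertex {p} is the cone over it.\<close>
  then have placed: "triangulation (insert p B)
      (insert {} T \<union> {insert p F | F. F \<in> insert {} T \<and> visible_from p (convex hull B) F})"
    using triangulation_placing[OF finB triangulation_insert_empty[OF Suc.prems(2)]] by blast
  have "A - insert p B = (A - B) - {p}" by blast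
  then have "n = card (A - insert p B)" using Suc.hyps(2) p fin by simp
  moreover have "insert p B \<subseteq> A" using Suc.prems(1) p by blast
  ultimately show ?case using Suc.hyps(1)[OF _ _ placed] by blast
qed

lemma finite_prodA: "finite (prodA :: ((real^5) \<times> (real^'n::finite)) set)"
proof -
  have "prodA = (\<lambda>(i, f). (axis i 1, axis f 1)) ` (UNIV :: (5 \<times> 'n) set)"
    unfolding prodA_def by auto
  also have "finite \<dots>" by (rule finite_imageI) simp
  finally show ?thesis .
qed

lemma prodA_not_in_convex_hull_others:
  assumes p: "p \<in> (prodA :: ((real^5) \<times> (real^'n::finite)) set)"
  shows "p \<notin> convex hull (prodA - {p})"
proof
  obtain i f where pe: "p = (axis i 1, axis f 1)" using p unfolding prodA_def by blast
  have "p \<bullet> q \<le> 1" if q: "q \<in> prodA - {p}" for q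
  proof -
    obtain j g where qe: "q = (axis j 1, axis g 1)"
      using q unfolding prodA_def by blast
    then have "i \<noteq> j \<or> f \<noteq> g" using q pe by auto
    then show ?thesis unfolding pe qe by (auto simp: inner_axis_axis)
  qed
  then have "convex hull (prodA - {p}) \<subseteq> {x. p \<bullet> x \<le> 1}"
    by (intro hull_minimal) (auto simp: convex_halfspace_le)
  moreover have "p \<bullet> p = 2" unfolding pe by (simp add: inner_axis_axis)
  moreover assume "p \<in> convex hull (prodA - {p})"
  ultimately show False by auto
qed

theorem proposition5p7:
  fixes lab :: "'n::finite \<Rightarrow> 5 set"
    and T :: "((real^5) \<times> (real^'n)) set set"
  assumes "\<forall>f. card (lab f) = 2"
    and "triangulation (perm_Pi lab) T"
  shows "\<exists>T'. triangulation (prodA :: ((real^5) \<times> (real^'n)) set) T' \<and> T \<subseteq> T'"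
proof -
  have "perm_Pi lab \<subseteq> (prodA :: ((real^5) \<times> (real^'n)) set)"
    unfolding perm_Pi_def prodA_def by blast
  then show ?thesis
    using triangulation_extend[OF finite_prodA prodA_not_in_convex_hull_others _ assms(2)] by blast
qed

end
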